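(* Fix $R_t>0$, $R_s=2^{R_t}$, all parameters $p_B,p_E,m_B,m_E,K_{B,r},K_{E,r}$ ($r=1,2$) and $\bar\gamma_E$, and regard the secrecy outage probability $P_o=\int_0^\infty F_B(R_s\gamma+R_s-1)f_E(\gamma)\,d\gamma$ as a function of $\bar\gamma_B$. Then the secrecy diversity order is $$G_d:=-\lim_{\bar\gamma_B\to\infty}\frac{\log P_o}{\log\bar\gamma_B}=1,$$ independently of $m_\ell$, $K_{\ell,r}$ and $p_\ell$.
   Context: Setting. For each $\ell\in\{B,E\}$ (legitimate receiver $B$, eavesdropper $E$) fix parameters $p_\ell\in[0,1]$, $m_\ell>0$, $K_{\ell,1},K_{\ell,2}>0$ and $\bar\gamma_\ell>0$; put $\bar K_\ell=p_\ell K_{\ell,1}+(1-p_\ell)K_{\ell,2}$, $Q_{\ell,1}=p_\ell$, $Q_{\ell,2}=1-p_\ell$. For $r\in\{1,2\}$ and $\gamma\ge0$ let $f_{RS,\ell,r}(\gamma)=\frac{1+\bar K_\ell}{\bar\gamma_\ell}\big(\frac{m_\ell}{m_\ell+K_{\ell,r}}\big)^{m_\ell}\exp\big(-\frac{(1+\bar K_\ell)\gamma}{\bar\gamma_\ell}\big)\,{}_1F_1\big(m_\ell;1;\frac{K_{\ell,r}(1+\bar K_\ell)\gamma}{\bar\gamma_\ell(m_\ell+K_{\ell,r})}\big)$ and $F_{RS,\ell,r}(\gamma)=\int_0^\gamma f_{RS,\ell,r}(t)\,dt$, where ${}_1F_1$ is Kummer's confluent hypergeometric function. The Alternate Rician Shadowed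 (ARS) SNR $\gamma_\ell$ has density $f_\ell=Q_{\ell,1}f_{RS,\ell,1}+Q_{\ell,2}f_{RS,\ell,2}$ and CDF $F_\ell=Q_{\ell,1}F_{RS,\ell,1}+Q_{\ell,2}F_{RS,\ell,2}$ on $[0,\infty)$; $\gamma_B,\gamma_E$ are independent. *)

theory Defs
  imports "HOL-Analysis.Analysis"
begin

definition kummer1F1 :: "real \<Rightarrow> real \<Rightarrow> real \<Rightarrow> real" where
  "kummer1F1 a b z = (\<Sum>n. pochhammer a n / pochhammer b n * z ^ n / fact n)"

definition Kbar :: "real \<Rightarrow> real \<Rightarrow> real \<Rightarrow> real" where
  "Kbar p K1 K2 = p * K1 + (1 - p) * K2"

text \<open>Rician shadowed density with shape m, Rician factor K, common factor Kb, mean SNR gb.\<close>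
definition fRS :: "real \<Rightarrow> real \<Rightarrow> real \<Rightarrow> real \<Rightarrow> real \<Rightarrow> real" where
  "fRS m Kb K gb x =
     (1 + Kb) / gb * (m / (m + K)) powr m * exp (- (1 + Kb) * x / gb)
     * kummer1F1 m 1 (K * (1 + Kb) * x / (gb * (m + K)))"

definition fARS :: "real \<Rightarrow> real \<Rightarrow> real \<Rightarrow> real \<Rightarrow> real \<Rightarrow> real \<Rightarrow> real" where
  "fARS p m K1 K2 gb x =
     p * fRS m (Kbar p K1 K2) K1 gb x + (1 - p) * fRS m (Kbar p K1 K2) K2 gb x"

definition FARS :: "real \<Rightarrow> real \<Rightarrow> real \<Rightarrow> real \<Rightarrow> real \<Rightarrow> real \<Rightarrow> real" where
  "FARS p m K1 K2 gb x = integral {0..x} (fARS p m K1 K2 gb)"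

definition SOP :: "real \<Rightarrow> real \<Rightarrow> real \<Rightarrow> real \<Rightarrow> real \<Rightarrow>
                   real \<Rightarrow> real \<Rightarrow> real \<Rightarrow> real \<Rightarrow> real \<Rightarrow> real \<Rightarrow> real" where
  "SOP Rt pB mB KB1 KB2 gB pE mE KE1 KE2 gE =
     integral {0..} (\<lambda>x. FARS pB mB KB1 KB2 gB ((2 powr Rt) * x + (2 powr Rt) - 1)
                        * fARS pE mE KE1 KE2 gE x)"

end

theory Submission
  imports Defs
begin

text \<open>
  Comparing the Kummer series termwise with the exponential series, and bounding its coefficients
  by those of the binomial series of (1 - r) powr (- m), gives
  1 \<le> 1F1(m; 1; z) \<le> (1 - r) powr (- m) * exp (z / r) for z \<ge> 0 and 0 < r < 1.
  Taking K/(m + K) < r < 1 squeezes every ARS density between c/gb * exp (-(1 + Kbar) x/gb) and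
  C/gb * exp (- a x/gb) with a > 0. Hence F_B(y) \<le> C y/gB, while F_B(y) \<ge> c/gB as soon as
  y \<ge> Rs - 1 > 0, which holds for the argument Rs x + Rs - 1. Integrating these bounds against
  the exponentially decaying density f_E gives c'/gB \<le> P_o \<le> C'/gB for gB \<ge> 1, and then
  - ln P_o / ln gB \<rightarrow> 1.
\<close>

section \<open>Integrability on the half-line\<close>

lemma integrable_on_if_continuous_dominated:
  fixes f g :: "real \<Rightarrow> real"
  assumes "continuous_on S f" "S \<in> sets lebesgue" "g integrable_on S" "\<And>x. x \<in> S \<Longrightarrow> \<bar>f x\<bar> \<le> g x"
  shows "f integrable_on S"
  by (rule measurable_bounded_by_integrable_imp_integrable_real[OF
        continuous_imp_measurable_on_sets_lebesgue[OF assms(1,2)] assms(3)])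
     (use assms(2,4) in auto)

lemma exp_decay_integrable_on:
  fixes f :: "real \<Rightarrow> real"
  assumes "continuous_on {0..} f" "0 < a" "\<And>x. 0 \<le> x \<Longrightarrow> \<bar>f x\<bar> \<le> C * exp (- a * x)"
  shows "f integrable_on {0..}"
proof (rule integrable_on_if_continuous_dominated)
  show "(\<lambda>x. C * exp (- a * x)) integrable_on {0..}"
    using integrable_cmul[OF integrable_on_exp_minus_to_infinity[OF assms(2)], of C] by simp
qed (use assms in auto)

lemma exp_decay_integrable_on_mult_id:
  fixes f :: "real \<Rightarrow> real"
  assumes "continuous_on {0..} f" "0 < a" "\<And>x. 0 \<le> x \<Longrightarrow> \<bar>f x\<bar> \<le> C * exp (- a * x)"
  shows "(\<lambda>x. x * f x) integrable_on {0..}"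
proof (rule exp_decay_integrable_on)
  show "continuous_on {0..} (\<lambda>x. x * f x)"
    using assms(1) by (intro continuous_intros)
  show "0 < a / 2" using assms(2) by simp
  fix x :: real
  assume x: "0 \<le> x"
  have "x \<le> 2 / a * exp (a / 2 * x)"
    using exp_ge_add_one_self[of "a / 2 * x"] assms(2) by (simp add: field_simps)
  then have "\<bar>x * f x\<bar> \<le> 2 / a * exp (a / 2 * x) * (C * exp (- a * x))"
    unfolding abs_mult abs_of_nonneg[OF x]
    by (rule mult_mono) (use assms(2) assms(3)[OF x] in simp_all)
  also have "\<dots> = 2 * C / a * (exp (a / 2 * x) * exp (- a * x))"
    by simp
  also have "\<dots> = 2 * C / a * exp (- (a / 2) * x)"
    unfolding mult_exp_exp by simp
  finally show "\<bar>x * f x\<bar> \<le> 2 * C / a * exp (- (a / 2) * x)" .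
qed

lemma continuous_on_comp_affine:
  fixes F :: "real \<Rightarrow> real"
  assumes "0 \<le> s" "0 < d" "\<And>y. 0 < y \<Longrightarrow> isCont F y"
  shows "continuous_on {0..} (\<lambda>x. F (s * x + d))"
proof (intro continuous_at_imp_continuous_on ballI)
  fix x :: real
  assume "x \<in> {0..}"
  then have "0 < s * x + d"
    using assms(1,2) by (simp add: add_nonneg_pos)
  then have "isCont F (s * x + d)"
    by (rule assms(3))
  moreover have "isCont (\<lambda>x. s * x + d) x"
    by (intro continuous_intros)
  ultimately show "isCont (\<lambda>x. F (s * x + d)) x"
    using isCont_o2 by blast
qed

lemma integral_comp_affine_mult_bounds:
  fixes F f :: "real \<Rightarrow> real" and s d c C :: real
  assumes s: "0 \<le> s" and d: "0 < d" and c: "0 \<le> c"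
    and F_cont: "\<And>y. 0 < y \<Longrightarrow> isCont F y"
    and F_ge: "\<And>y. d \<le> y \<Longrightarrow> c \<le> F y" and F_le: "\<And>y. 0 \<le> y \<Longrightarrow> F y \<le> C * y"
    and f_cont: "continuous_on {0..} f" and f_nonneg: "\<And>x. 0 \<le> x \<Longrightarrow> 0 \<le> f x"
    and f_int: "f integrable_on {0..}" and id_f_int: "(\<lambda>x. x * f x) integrable_on {0..}"
  shows "c * integral {0..} f \<le> integral {0..} (\<lambda>x. F (s * x + d) * f x)"
    and "integral {0..} (\<lambda>x. F (s * x + d) * f x) \<le> C * integral {0..} (\<lambda>x. (s * x + d) * f x)"
proof -
  define w where "w x = s * x + d" for x
  have w: "d \<le> w x" if "0 \<le> x" for x
    using that s by (simp add: w_def)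
  have wf_int: "(\<lambda>x. w x * f x) integrable_on {0..}"
    using integrable_add[OF integrable_cmul[OF id_f_int, of s] integrable_cmul[OF f_int, of d]]
    by (simp add: w_def algebra_simps)
  have lower: "c * f x \<le> F (w x) * f x" and upper: "F (w x) * f x \<le> C * (w x * f x)"
    if x: "0 \<le> x" for x
  proof -
    show "c * f x \<le> F (w x) * f x"
      using F_ge[OF w[OF x]] f_nonneg[OF x] by (rule mult_right_mono)
    have "F (w x) * f x \<le> C * w x * f x"
      using F_le[of "w x"] w[OF x] d f_nonneg[OF x] by (intro mult_right_mono) auto
    then show "F (w x) * f x \<le> C * (w x * f x)"
      by (simp only: mult.assoc)
  qed
  have int: "(\<lambda>x. F (w x) * f x) integrable_on {0..}"
  proof (rule integrable_on_if_continuous_dominated)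
    show "continuous_on {0..} (\<lambda>x. F (w x) * f x)"
      unfolding w_def using continuous_on_comp_affine[OF s d F_cont] f_cont
      by (rule continuous_on_mult)
    show "(\<lambda>x. C * (w x * f x)) integrable_on {0..}"
      using integrable_cmul[OF wf_int, of C] by simp
    show "\<bar>F (w x) * f x\<bar> \<le> C * (w x * f x)" if "x \<in> {0..}" for x
    proof -
      have "0 \<le> F (w x) * f x"
        using lower[of x] mult_nonneg_nonneg[OF c f_nonneg[of x]] that by simp
      then show ?thesis
        using upper[of x] that by simp
    qed
  qed simp
  have "integral {0..} (\<lambda>x. c * f x) \<le> integral {0..} (\<lambda>x. F (w x) * f x)"
    using integrable_cmul[OF f_int, of c] int lower by (intro integral_le) simp_all
  then show "c * integral {0..} f \<le> integral {0..} (\<lambda>x. F (s * x + d) * f x)"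
    by (simp add: w_def)
  have "integral {0..} (\<lambda>x. F (w x) * f x) \<le> integral {0..} (\<lambda>x. C * (w x * f x))"
    using integrable_cmul[OF wf_int, of C] int upper by (intro integral_le) simp_all
  then show "integral {0..} (\<lambda>x. F (s * x + d) * f x) \<le> C * integral {0..} (\<lambda>x. (s * x + d) * f x)"
    by (simp add: w_def)
qed

section \<open>Kummer's function\<close>

text \<open>The left-hand side is a term of the binomial series of (1 - r) powr (- m).\<close>

lemma pochhammer_power_div_fact_le:
  fixes m r :: real
  assumes "0 < m" "0 \<le> r" "r < 1"
  shows "pochhammer m n * r ^ n / fact n \<le> (1 - r) powr (- m)"
proof -
  have sums: "(\<lambda>n. pochhammer m n * r ^ n / fact n) sums (1 - r) powr (- m)"
    using gen_binomial_real[of "- r" "- m"] assms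
    by (simp add: gbinomial_pochhammer power_mult_distrib[symmetric] mult_ac)
  have "0 \<le> pochhammer m k * r ^ k / fact k" for k
    using assms by (intro divide_nonneg_nonneg mult_nonneg_nonneg pochhammer_nonneg) simp_all
  then show ?thesis
    using sum_le_suminf[OF sums_summable[OF sums], of "{n}"] sums_unique[OF sums] by simp
qed

lemma kummer1F1_term_eq:
  fixes m r z :: real
  assumes "r > 0"
  shows "pochhammer m n / pochhammer 1 n * z ^ n / fact n
           = (pochhammer m n * r ^ n / fact n) * ((z / r) ^ n / fact n)"
  using assms by (simp add: pochhammer_fact[symmetric] power_divide field_simps)

lemma kummer1F1_term_nonneg:
  fixes m z :: real
  assumes "0 < m" "0 \<le> z"
  shows "0 \<le> pochhammer m n / pochhammer 1 n * z ^ n / fact n"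
  using assms by (intro divide_nonneg_nonneg mult_nonneg_nonneg pochhammer_nonneg) simp_all

lemma summable_exp_series: "summable (\<lambda>n. (x::real) ^ n / fact n)"
  using summable_exp[of x] by (simp add: divide_inverse mult.commute)

lemma summable_kummer1F1_series:
  fixes m z :: real
  assumes "0 < m"
  shows "summable (\<lambda>n. pochhammer m n / pochhammer 1 n * z ^ n / fact n)"
proof (rule summable_comparison_test)
  define t where "t n = (\<bar>z\<bar> / (1/2)) ^ n / fact n" for n
  show "summable (\<lambda>n. 2 powr m * t n)"
    unfolding t_def by (intro summable_mult summable_exp_series)
  have "norm (pochhammer m n / pochhammer 1 n * z ^ n / fact n)
          = pochhammer m n / pochhammer 1 n * \<bar>z\<bar> ^ n / fact n" for n
    using pochhammer_nonneg[OF assms, of n]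
    by (simp add: abs_mult power_abs pochhammer_fact[symmetric])
  also have "\<dots> n = (pochhammer m n * (1/2) ^ n / fact n) * t n" for n
    unfolding t_def by (rule kummer1F1_term_eq) simp
  also have "\<dots> n \<le> 2 powr m * t n" for n
    using pochhammer_power_div_fact_le[of m "1/2" n] assms
    by (intro mult_right_mono) (simp_all add: t_def powr_minus_divide powr_divide)
  finally show "\<exists>N. \<forall>n\<ge>N. norm (pochhammer m n / pochhammer 1 n * z ^ n / fact n) \<le> 2 powr m * t n"
    by blast
qed

lemma kummer1F1_ge_1:
  fixes m z :: real
  assumes "0 < m" "0 \<le> z"
  shows "1 \<le> kummer1F1 m 1 z"
  using sum_le_suminf[OF summable_kummer1F1_series[OF assms(1)], of "{0}"]
    kummer1F1_term_nonneg[OF assms]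
  by (simp add: kummer1F1_def)

lemma kummer1F1_le_exp:
  fixes m r z :: real
  assumes "0 < m" "0 < r" "r < 1" "0 \<le> z"
  shows "kummer1F1 m 1 z \<le> (1 - r) powr (- m) * exp (z / r)"
proof -
  have "kummer1F1 m 1 z \<le> (\<Sum>n. (1 - r) powr (- m) * ((z / r) ^ n / fact n))"
    unfolding kummer1F1_def
  proof (rule suminf_le)
    show "pochhammer m n / pochhammer 1 n * z ^ n / fact n
            \<le> (1 - r) powr (- m) * ((z / r) ^ n / fact n)" for n
      unfolding kummer1F1_term_eq[OF assms(2)] using assms
      by (intro mult_right_mono pochhammer_power_div_fact_le) simp_all
    show "summable (\<lambda>n. pochhammer m n / pochhammer 1 n * z ^ n / fact n)"
      using summable_kummer1F1_series[OF assms(1)] .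
    show "summable (\<lambda>n. (1 - r) powr (- m) * ((z / r) ^ n / fact n))"
      by (intro summable_mult summable_exp_series)
  qed
  also have "\<dots> = (1 - r) powr (- m) * exp (z / r)"
    using exp_converges[of "z / r"]
    by (simp add: suminf_mult summable_exp_series sums_iff divide_inverse mult.commute)
  finally show ?thesis .
qed

lemma continuous_on_kummer1F1 [continuous_intros]:
  fixes m :: real
  assumes "0 < m" "continuous_on S g"
  shows "continuous_on S (\<lambda>x. kummer1F1 m 1 (g x))"
proof -
  have "kummer1F1 m 1 = (\<lambda>z. \<Sum>n. (pochhammer m n / pochhammer 1 n / fact n) * z ^ n)"
    unfolding kummer1F1_def by (simp add: field_simps)
  moreover have "continuous_on UNIV \<dots>"
    using summable_kummer1F1_series[OF assms(1)]
    by (intro continuous_at_imp_continuous_on ballI isCont_powser_converges_everywhere)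
       (simp add: field_simps)
  ultimately show ?thesis
    using continuous_on_compose2[of UNIV "kummer1F1 m 1" S g] assms(2) by simp
qed

section \<open>Bounds on the Rician shadowed densities\<close>

lemma fRS_ge_exp:
  fixes m Kb K gb x :: real
  assumes "0 < m" "0 \<le> K" "0 \<le> Kb" "0 < gb" "0 \<le> x"
  shows "(1 + Kb) / gb * (m / (m + K)) powr m * exp (- (1 + Kb) * x / gb) \<le> fRS m Kb K gb x"
proof -
  have "1 \<le> kummer1F1 m 1 (K * (1 + Kb) * x / (gb * (m + K)))"
    using assms by (intro kummer1F1_ge_1) auto
  moreover have "0 \<le> (1 + Kb) / gb * (m / (m + K)) powr m * exp (- (1 + Kb) * x / gb)"
    using assms by simp
  ultimately show ?thesis
    unfolding fRS_def by (metis mult_left_mono mult.right_neutral)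
qed

text \<open>
  With u = (1 + Kb) x / gb the density is a multiple of exp (- u) * 1F1(m; 1; c u), where
  c = K / (m + K) < 1; any r with c < r < 1 makes the decay exp (- (1 - c/r) u) survive.
\<close>

lemma fRS_le_exp:
  fixes m Kb K :: real
  assumes m: "0 < m" and K: "0 \<le> K" and Kb: "0 \<le> Kb"
  shows "\<exists>C a. 0 \<le> C \<and> 0 < a \<and>
           (\<forall>gb>0. \<forall>x\<ge>0. fRS m Kb K gb x \<le> C / gb * exp (- a * x / gb))"
proof -
  define c where "c = K / (m + K)"
  define r where "r = (1 + c) / 2"
  have c: "0 \<le> c" "c < 1"
    using m K by (auto simp: c_def)
  then have r: "0 < r" "r < 1" "c < r"
    by (auto simp: r_def)
  define C where "C = (1 + Kb) * (m / (m + K)) powr m * (1 - r) powr (- m)"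
  define a where "a = (1 + Kb) * (1 - c / r)"
  have "fRS m Kb K gb x \<le> C / gb * exp (- a * x / gb)" if gb: "0 < gb" and x: "0 \<le> x" for gb x
  proof -
    define u where "u = (1 + Kb) * x / gb"
    have u: "0 \<le> u" using Kb gb x by (simp add: u_def)
    have "fRS m Kb K gb x = (1 + Kb) / gb * (m / (m + K)) powr m * exp (- u) * kummer1F1 m 1 (c * u)"
    proof -
      have "K * (1 + Kb) * x / (gb * (m + K)) = c * u" "- (1 + Kb) * x / gb = - u"
        using gb by (simp_all add: c_def u_def field_simps)
      then show ?thesis
        unfolding fRS_def by simp
    qed
    also have "\<dots> \<le> (1 + Kb) / gb * (m / (m + K)) powr m * exp (- u) * ((1 - r) powr (- m) * exp (c * u / r))"
      using Kb gb c u r m by (intro mult_left_mono kummer1F1_le_exp) auto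
    also have "\<dots> = C / gb * exp (- a * x / gb)"
    proof -
      have "- u + c * u / r = - a * x / gb"
        using r gb by (simp add: a_def u_def field_simps)
      then show ?thesis
        by (simp add: C_def mult_ac exp_add[symmetric])
    qed
    finally show ?thesis .
  qed
  moreover have "0 \<le> C" "0 < a"
    using Kb r by (auto simp: C_def a_def)
  ultimately show ?thesis by blast
qed

lemma continuous_on_fRS [continuous_intros]:
  "0 < m \<Longrightarrow> continuous_on S (fRS m Kb K gb)"
  unfolding fRS_def divide_inverse by (intro continuous_intros)

lemma Kbar_nonneg: "0 \<le> p \<Longrightarrow> p \<le> 1 \<Longrightarrow> 0 \<le> K1 \<Longrightarrow> 0 \<le> K2 \<Longrightarrow> 0 \<le> Kbar p K1 K2"
  unfolding Kbar_def by simp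

lemma continuous_on_fARS [continuous_intros]:
  "0 < m \<Longrightarrow> continuous_on S (fARS p m K1 K2 gb)"
  unfolding fARS_def by (intro continuous_intros)

lemma integrable_fARS_interval: "0 < m \<Longrightarrow> fARS p m K1 K2 gb integrable_on {a..b}"
  by (intro integrable_continuous_interval continuous_intros)

lemma isCont_FARS:
  assumes m: "0 < m" and y: "0 < y"
  shows "isCont (FARS p m K1 K2 gb) y"
proof -
  have "((\<lambda>x. integral {0..x} (fARS p m K1 K2 gb)) has_real_derivative fARS p m K1 K2 gb y)
          (at y within {0..y + 1})"
    using y m by (intro integral_has_real_derivative continuous_intros) auto
  moreover have "at y within {0..y + 1} = at y"
    using y by (intro at_within_interior) auto
  ultimately show ?thesis
    unfolding FARS_def[abs_def] by (auto intro: DERIV_isCont)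
qed

context
  fixes p m K1 K2 :: real
  assumes p: "0 \<le> p" "p \<le> 1" and m: "0 < m" and K: "0 \<le> K1" "0 \<le> K2"
begin

lemma fARS_ge_exp:
  "\<exists>c>0. \<forall>gb>0. \<forall>x\<ge>0.
           c / gb * exp (- (1 + Kbar p K1 K2) * x / gb) \<le> fARS p m K1 K2 gb x"
proof -
  define Kb where "Kb = Kbar p K1 K2"
  have Kb: "0 \<le> Kb" using Kbar_nonneg[OF p K] by (simp add: Kb_def)
  define c where "c = (1 + Kb) * min ((m / (m + K1)) powr m) ((m / (m + K2)) powr m)"
  have "c / gb * exp (- (1 + Kb) * x / gb) \<le> fARS p m K1 K2 gb x" if gb: "0 < gb" and x: "0 \<le> x" for gb x
  proof -
    define e where "e = exp (- (1 + Kb) * x / gb)"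
    have "c / gb * e \<le> fRS m Kb K gb x" if "K \<in> {K1, K2}" for K
    proof -
      have "c \<le> (1 + Kb) * (m / (m + K)) powr m"
        using that Kb by (auto simp: c_def intro: mult_left_mono)
      then have "c / gb * e \<le> (1 + Kb) / gb * (m / (m + K)) powr m * e"
        using gb by (simp add: e_def divide_right_mono mult_right_mono)
      also have "\<dots> \<le> fRS m Kb K gb x"
        unfolding e_def using that m K Kb gb x by (intro fRS_ge_exp) auto
      finally show ?thesis .
    qed
    then have "p * (c / gb * e) + (1 - p) * (c / gb * e) \<le> fARS p m K1 K2 gb x"
      unfolding fARS_def Kb_def[symmetric] using p by (intro add_mono mult_left_mono) auto
    moreover have "p * (c / gb * e) + (1 - p) * (c / gb * e) = c / gb * e"
      by (simp add: algebra_simps add_divide_distrib[symmetric])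
    ultimately show ?thesis
      by (simp add: e_def)
  qed
  moreover have "0 < c"
    using Kb m K by (simp add: c_def)
  ultimately show ?thesis
    unfolding Kb_def by blast
qed

lemma fARS_nonneg:
  assumes "0 < gb" "0 \<le> x"
  shows "0 \<le> fARS p m K1 K2 gb x"
proof -
  obtain c where "0 < c" and c: "c / gb * exp (- (1 + Kbar p K1 K2) * x / gb) \<le> fARS p m K1 K2 gb x"
    using fARS_ge_exp assms by blast
  have "0 \<le> c / gb * exp (- (1 + Kbar p K1 K2) * x / gb)"
    using \<open>0 < c\<close> assms(1) by simp
  then show ?thesis
    using c by linarith
qed

lemma fARS_le_exp:
  "\<exists>C a. 0 \<le> C \<and> 0 < a \<and>
           (\<forall>gb>0. \<forall>x\<ge>0. fARS p m K1 K2 gb x \<le> C / gb * exp (- a * x / gb))"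
proof -
  define Kb where "Kb = Kbar p K1 K2"
  have Kb: "0 \<le> Kb" using Kbar_nonneg[OF p K] by (simp add: Kb_def)
  obtain C1 a1 where C1: "0 \<le> C1" "0 < a1"
    and f1: "\<And>gb x. 0 < gb \<Longrightarrow> 0 \<le> x \<Longrightarrow> fRS m Kb K1 gb x \<le> C1 / gb * exp (- a1 * x / gb)"
    using fRS_le_exp[OF m K(1) Kb] by blast
  obtain C2 a2 where C2: "0 \<le> C2" "0 < a2"
    and f2: "\<And>gb x. 0 < gb \<Longrightarrow> 0 \<le> x \<Longrightarrow> fRS m Kb K2 gb x \<le> C2 / gb * exp (- a2 * x / gb)"
    using fRS_le_exp[OF m K(2) Kb] by blast
  define C where "C = max C1 C2"
  define a where "a = min a1 a2"
  have weaken: "C' / gb * exp (- a' * x / gb) \<le> C / gb * exp (- a * x / gb)"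
    if "0 \<le> C'" "C' \<le> C" "a \<le> a'" "0 < gb" "0 \<le> x" for C' a' gb x
  proof (intro mult_mono divide_right_mono)
    show "exp (- a' * x / gb) \<le> exp (- a * x / gb)"
      using that by (simp add: divide_right_mono mult_right_mono)
  qed (use that in auto)
  have "fARS p m K1 K2 gb x \<le> C / gb * exp (- a * x / gb)" if "0 < gb" "0 \<le> x" for gb x
    unfolding fARS_def Kb_def[symmetric]
  proof (rule convex_bound_le)
    show "fRS m Kb K1 gb x \<le> C / gb * exp (- a * x / gb)"
      using f1[OF that] weaken[of C1 a1 gb x] that C1 by (simp add: C_def a_def)
    show "fRS m Kb K2 gb x \<le> C / gb * exp (- a * x / gb)"
      using f2[OF that] weaken[of C2 a2 gb x] that C2 by (simp add: C_def a_def)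
  qed (use p in auto)
  moreover have "0 \<le> C" "0 < a"
    using C1 C2 by (auto simp: C_def a_def)
  ultimately show ?thesis by blast
qed

lemma integrable_fARS:
  assumes "0 < gb"
  shows "fARS p m K1 K2 gb integrable_on {0..}"
    and "(\<lambda>x. x * fARS p m K1 K2 gb x) integrable_on {0..}"
proof -
  obtain C a where "0 < a"
    and le: "\<And>gb x. 0 < gb \<Longrightarrow> 0 \<le> x \<Longrightarrow> fARS p m K1 K2 gb x \<le> C / gb * exp (- a * x / gb)"
    using fARS_le_exp by blast
  have bound: "\<bar>fARS p m K1 K2 gb x\<bar> \<le> C / gb * exp (- (a / gb) * x)" if "0 \<le> x" for x
    using le[OF assms that] fARS_nonneg[OF assms that] by simp
  have a: "0 < a / gb"
    using \<open>0 < a\<close> assms by simp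
  have cont: "continuous_on {0..} (fARS p m K1 K2 gb)"
    using m by (intro continuous_intros)
  show "fARS p m K1 K2 gb integrable_on {0..}"
    by (rule exp_decay_integrable_on[OF cont a bound])
  show "(\<lambda>x. x * fARS p m K1 K2 gb x) integrable_on {0..}"
    by (rule exp_decay_integrable_on_mult_id[OF cont a bound])
qed

lemma integral_fARS_pos:
  assumes gb: "0 < gb"
  shows "0 < integral {0..} (fARS p m K1 K2 gb)"
proof -
  define b where "b = (1 + Kbar p K1 K2) / gb"
  have b: "0 < b"
    using Kbar_nonneg[OF p K] gb by (simp add: b_def)
  obtain c where c: "0 < c"
    and ge0: "\<And>x. 0 \<le> x \<Longrightarrow> c / gb * exp (- (1 + Kbar p K1 K2) * x / gb) \<le> fARS p m K1 K2 gb x"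
    using fARS_ge_exp gb by blast
  have "- (1 + Kbar p K1 K2) * x / gb = - b * x" for x
    using gb by (simp add: b_def field_simps)
  then have ge: "\<And>x. 0 \<le> x \<Longrightarrow> c / gb * exp (- b * x) \<le> fARS p m K1 K2 gb x"
    using ge0 by simp
  have "((\<lambda>x. c / gb * exp (- b * x)) has_integral c / gb * (1 / b)) {0..}"
    using has_integral_mult_right[OF has_integral_exp_minus_to_infinity[OF b, of 0], where c = "c / gb"]
    by simp
  then have "c / gb * (1 / b) \<le> integral {0..} (fARS p m K1 K2 gb)"
    by (rule has_integral_le[OF _ integrable_integral[OF integrable_fARS(1)[OF gb]]])
       (use ge in auto)
  moreover have "0 < c / gb * (1 / b)"
    using c gb b by simp
  ultimately show ?thesis by linarith
qed

lemma FARS_le_linear: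
  obtains C where "\<And>gb y. 0 < gb \<Longrightarrow> 0 \<le> y \<Longrightarrow> FARS p m K1 K2 gb y \<le> C / gb * y"
proof -
  obtain C a where "0 \<le> C" "0 < a"
    and le: "\<And>gb x. 0 < gb \<Longrightarrow> 0 \<le> x \<Longrightarrow> fARS p m K1 K2 gb x \<le> C / gb * exp (- a * x / gb)"
    using fARS_le_exp by blast
  have "FARS p m K1 K2 gb y \<le> C / gb * y" if gb: "0 < gb" and y: "0 \<le> y" for gb y
  proof -
    have "fARS p m K1 K2 gb x \<le> C / gb" if "x \<in> {0..y}" for x
    proof -
      have "exp (- a * x / gb) \<le> 1"
        using that \<open>0 < a\<close> gb by simp
      then have "C / gb * exp (- a * x / gb) \<le> C / gb"
        using \<open>0 \<le> C\<close> gb by (intro mult_left_le) auto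
      then show ?thesis
        using le[OF gb, of x] that by simp
    qed
    then have "FARS p m K1 K2 gb y \<le> integral {0..y} (\<lambda>_. C / gb)"
      unfolding FARS_def by (intro integral_le integrable_fARS_interval[OF m]) auto
    then show ?thesis
      using y by (simp add: mult_ac)
  qed
  then show ?thesis
    using that by blast
qed

lemma FARS_ge_const:
  assumes d: "0 < d"
  obtains c where "0 < c" "\<And>gb y. 1 \<le> gb \<Longrightarrow> d \<le> y \<Longrightarrow> c / gb \<le> FARS p m K1 K2 gb y"
proof -
  define Kb where "Kb = Kbar p K1 K2"
  have Kb: "0 \<le> Kb"
    using Kbar_nonneg[OF p K] by (simp add: Kb_def)
  obtain c0 where c0: "0 < c0"
    and ge: "\<And>gb x. 0 < gb \<Longrightarrow> 0 \<le> x \<Longrightarrow> c0 / gb * exp (- (1 + Kb) * x / gb) \<le> fARS p m K1 K2 gb x"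
    using fARS_ge_exp unfolding Kb_def by blast
  define c where "c = c0 * exp (- (1 + Kb) * d) * d"
  have "c / gb \<le> FARS p m K1 K2 gb y" if gb: "1 \<le> gb" and y: "d \<le> y" for gb y
  proof -
    have "c0 / gb * exp (- (1 + Kb) * d) \<le> fARS p m K1 K2 gb t" if t: "t \<in> {0..d}" for t
    proof -
      have "(1 + Kb) * t \<le> (1 + Kb) * d"
        using t Kb by (intro mult_left_mono) auto
      also have "\<dots> \<le> (1 + Kb) * d * gb"
        using mult_left_mono[OF gb, of "(1 + Kb) * d"] Kb d by simp
      finally have "(1 + Kb) * t / gb \<le> (1 + Kb) * d"
        using gb by (intro mult_imp_div_pos_le) auto
      then have "- (1 + Kb) * d \<le> - (1 + Kb) * t / gb"
        unfolding mult_minus_left minus_divide_left[symmetric] by linarith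
      then have "c0 / gb * exp (- (1 + Kb) * d) \<le> c0 / gb * exp (- (1 + Kb) * t / gb)"
        using c0 gb by (intro mult_left_mono) auto
      also have "\<dots> \<le> fARS p m K1 K2 gb t"
        using ge t gb by simp
      finally show ?thesis .
    qed
    then have "integral {0..d} (\<lambda>_. c0 / gb * exp (- (1 + Kb) * d)) \<le> integral {0..d} (fARS p m K1 K2 gb)"
      by (intro integral_le integrable_fARS_interval[OF m]) auto
    also have "\<dots> \<le> FARS p m K1 K2 gb y"
      unfolding FARS_def
      by (rule integral_subset_le) (use y gb fARS_nonneg integrable_fARS_interval[OF m] in auto)
    finally show ?thesis
      using d by (simp add: c_def mult_ac)
  qed
  moreover have "0 < c"
    using c0 d by (simp add: c_def)
  ultimately show ?thesis
    using that by blast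
qed

end

section \<open>Secrecy outage probability\<close>

lemma SOP_inverse_bounds:
  fixes Rt pB mB KB1 KB2 pE mE KE1 KE2 gE :: real
  assumes Rt: "0 < Rt"
    and B: "0 \<le> pB" "pB \<le> 1" "0 < mB" "0 \<le> KB1" "0 \<le> KB2"
    and E: "0 \<le> pE" "pE \<le> 1" "0 < mE" "0 \<le> KE1" "0 \<le> KE2" and gE: "0 < gE"
  obtains c C where "0 < c"
    "\<And>gB. 1 \<le> gB \<Longrightarrow> c / gB \<le> SOP Rt pB mB KB1 KB2 gB pE mE KE1 KE2 gE"
    "\<And>gB. 1 \<le> gB \<Longrightarrow> SOP Rt pB mB KB1 KB2 gB pE mE KE1 KE2 gE \<le> C / gB"
proof -
  define Rs where "Rs = (2::real) powr Rt"
  define fE where "fE = fARS pE mE KE1 KE2 gE"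
  have Rs: "0 < Rs - 1"
    using Rt by (simp add: Rs_def)
  obtain cB where cB: "0 < cB"
    and FB_ge: "\<And>gB y. 1 \<le> gB \<Longrightarrow> Rs - 1 \<le> y \<Longrightarrow> cB / gB \<le> FARS pB mB KB1 KB2 gB y"
    using FARS_ge_const[OF B Rs] by blast
  obtain CB where FB_le: "\<And>gB y. 0 < gB \<Longrightarrow> 0 \<le> y \<Longrightarrow> FARS pB mB KB1 KB2 gB y \<le> CB / gB * y"
    using FARS_le_linear[OF B] by blast
  have fE: "continuous_on {0..} fE" "\<And>x. 0 \<le> x \<Longrightarrow> 0 \<le> fE x"
    "fE integrable_on {0..}" "(\<lambda>x. x * fE x) integrable_on {0..}"
    unfolding fE_def using E(3) fARS_nonneg[OF E gE] integrable_fARS[OF E gE]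
    by (auto intro: continuous_intros)
  have SOP_eq: "SOP Rt pB mB KB1 KB2 gB pE mE KE1 KE2 gE
                  = integral {0..} (\<lambda>x. FARS pB mB KB1 KB2 gB (Rs * x + (Rs - 1)) * fE x)" for gB
    by (simp add: SOP_def Rs_def fE_def add_diff_eq)
  have bounds: "cB / gB * integral {0..} fE \<le> integral {0..} (\<lambda>x. FARS pB mB KB1 KB2 gB (Rs * x + (Rs - 1)) * fE x)
      \<and> integral {0..} (\<lambda>x. FARS pB mB KB1 KB2 gB (Rs * x + (Rs - 1)) * fE x)
          \<le> CB / gB * integral {0..} (\<lambda>x. (Rs * x + (Rs - 1)) * fE x)"
    if gB: "1 \<le> gB" for gB
    using integral_comp_affine_mult_bounds[OF _ Rs _ isCont_FARS[OF B(3)] FB_ge[OF gB]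
        FB_le[OF order.strict_trans2[OF zero_less_one gB]] fE] gB Rs cB
    by simp
  show ?thesis
  proof (rule that)
    show "0 < cB * integral {0..} fE"
      unfolding fE_def using cB integral_fARS_pos[OF E gE] by simp
    show "cB * integral {0..} fE / gB \<le> SOP Rt pB mB KB1 KB2 gB pE mE KE1 KE2 gE"
      and "SOP Rt pB mB KB1 KB2 gB pE mE KE1 KE2 gE \<le> CB * integral {0..} (\<lambda>x. (Rs * x + (Rs - 1)) * fE x) / gB"
      if gB: "1 \<le> gB" for gB
      unfolding SOP_eq using bounds[OF gB] by simp_all
  qed
qed

lemma tendsto_neg_ln_div_ln_if_inverse_bounds:
  fixes P :: "real \<Rightarrow> real"
  assumes c: "0 < c" and bounds: "\<forall>\<^sub>F x in at_top. c / x \<le> P x \<and> P x \<le> C / x"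
  shows "((\<lambda>x. - ln (P x) / ln x) \<longlongrightarrow> 1) at_top"
proof -
  have ln_const: "((\<lambda>x. ln a / ln x) \<longlongrightarrow> 0) at_top" for a :: real
    by (rule tendsto_divide_0[OF tendsto_const filterlim_at_top_imp_at_infinity[OF ln_at_top]])
  have ev: "\<forall>\<^sub>F x in at_top. ln c / ln x \<le> ln (x * P x) / ln x \<and> ln (x * P x) / ln x \<le> ln C / ln x
              \<and> - ln (P x) / ln x = 1 - ln (x * P x) / ln x"
    using bounds eventually_gt_at_top[of 1]
  proof eventually_elim
    case (elim x)
    then have lx: "0 < ln x" and "0 < c / x"
      using c by simp_all
    then have "0 < P x"
      using elim by linarith
    have "c \<le> x * P x" "x * P x \<le> C"
      using elim by (simp_all add: field_simps)
    then have "ln c \<le> ln (x * P x)" "ln (x * P x) \<le> ln C"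
      using c by simp_all
    moreover have "- ln (P x) / ln x = 1 - ln (x * P x) / ln x"
      using lx \<open>0 < P x\<close> elim by (simp add: ln_mult field_simps)
    ultimately show ?case
      using lx by (simp add: divide_right_mono)
  qed
  have "((\<lambda>x. ln (x * P x) / ln x) \<longlongrightarrow> 0) at_top"
    by (rule tendsto_sandwich[OF _ _ ln_const ln_const]) (use ev in \<open>auto elim: eventually_mono\<close>)
  then have "((\<lambda>x. 1 - ln (x * P x) / ln x) \<longlongrightarrow> 1) at_top"
    using tendsto_diff[OF tendsto_const, of _ 0 at_top 1] by simp
  then show ?thesis
    by (rule Lim_transform_eventually) (use ev in \<open>auto elim: eventually_mono\<close>)
qed

theorem mainTheorem10:
  fixes Rt pB mB KB1 KB2 pE mE KE1 KE2 gE :: real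
  assumes "Rt > 0"
    and "0 \<le> pB" "pB \<le> 1" "mB > 0" "KB1 > 0" "KB2 > 0"
    and "0 \<le> pE" "pE \<le> 1" "mE > 0" "KE1 > 0" "KE2 > 0" "gE > 0"
  shows "((\<lambda>gB. - ln (SOP Rt pB mB KB1 KB2 gB pE mE KE1 KE2 gE) / ln gB) \<longlongrightarrow> 1) at_top"
proof -
  have K: "0 \<le> KB1" "0 \<le> KB2" "0 \<le> KE1" "0 \<le> KE2"
    using assms by simp_all
  obtain c C where "0 < c"
    and lower: "\<And>gB. 1 \<le> gB \<Longrightarrow> c / gB \<le> SOP Rt pB mB KB1 KB2 gB pE mE KE1 KE2 gE"
    and upper: "\<And>gB. 1 \<le> gB \<Longrightarrow> SOP Rt pB mB KB1 KB2 gB pE mE KE1 KE2 gE \<le> C / gB"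
    using SOP_inverse_bounds[OF assms(1-4) K(1,2) assms(7-9) K(3,4) assms(12)] by blast
  have "\<forall>\<^sub>F gB in at_top. c / gB \<le> SOP Rt pB mB KB1 KB2 gB pE mE KE1 KE2 gE
                          \<and> SOP Rt pB mB KB1 KB2 gB pE mE KE1 KE2 gE \<le> C / gB"
    using eventually_ge_at_top[of 1] by eventually_elim (simp add: lower upper)
  then show ?thesis
    by (rule tendsto_neg_ln_div_ln_if_inverse_bounds[OF \<open>0 < c\<close>])
qed

end
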